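(* Let $n\ge1$ and let $\mathfrak{c}=\{c_{ij}\}_{1\le i<j\le n}$, $\mathfrak{\ell}=\{\ell_1,\dots,\ell_n\}$ be integers. Let $C=C(\mathfrak{c},\mathfrak{\ell})$ be the support of the associated Grossberg–Karshon twisted cube, $\{m_\sigma\}_{\sigma\in\{+,-\}^n}$ the Cartier data of the divisor $D(\mathfrak{c},\mathfrak{\ell})$ on $X(\mathfrak{c})$, and $P_{D(\mathfrak{c},\mathfrak{\ell})}$ the associated polytope. Then the following are equivalent: (a) $C$ is closed in $\mathbb{R}^n$ (Euclidean topology); (b) $m_\sigma\in C$ for all $\sigma$; (c) $m_{\sigma,k}\ge0$ for all $\sigma$ and all $1\le k\le n$, where $m_\sigma=(m_{\sigma,1},\dots,m_{\sigma,n})$; (d) $\mathfrak{c},\mathfrak{\ell}$ satisfy condition (P); (e) $C=P_{D(\mathfrak{c},\mathfrak{\ell})}$.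
   Context: Functions on $\mathbb{R}^n$: $A_n(x)=\ell_n$ and $A_j(x)=\ell_j-\sum_{k=j+1}^n c_{jk}x_k$ for $1\le j\le n-1$ (so $A_j$ depends only on $x_{j+1},\dots,x_n$). $C(\mathfrak{c},\mathfrak{\ell})$ is the set of $x\in\mathbb{R}^n$ such that for every $1\le k\le n$: $A_k(x)<x_k<0$ or $0\le x_k\le A_k(x)$. Condition (P): $\ell_n\ge0$, and for every $1\le k\le n-1$: whenever $(x_{k+1},\dots,x_n)$ satisfies $0\le x_i\le A_i(x_{i+1},\dots,x_n)$ for all $k+1\le i\le n$, then $A_k(x_{k+1},\dots,x_n)\ge0$. Toric data: $e_1^+,\dots,e_n^+$ standard basis of $\mathbb{R}^n$, $e_j^-:=-e_j^+-\sum_{k>j}c_{jk}e_k^+$; $\Sigma_{\mathfrak{c}}$ is the fan of cones generated by subsets of $\{e_1^\pm,\dots,e_n^\pm\}$ containing no pair $\{e_j^+,e_j^-\}$, with maximal cones $\mathrm{Cone}\{e_1^{\sigma_1},\dots,e_n^{\sigma_n}\}$, $\sigma\in\{+,-\}^n$; $X(\mathfrak{c})$ its smooth toric variety; $D(\mathfrak{c},\mathfrak{\ell})=\sum_j\ell_jD_{e_j^-}$ with $D_{e_j^-}$ the torus-invariant divisor of the ray through $e_j^-$. Its Cartier data is the collection $m_\sigma\in\mathbb{Z}^n$ with $\langle m_\sigma,u\rangle=-a_u$ for each ray generator $u\in\{e_1^{\sigma_1},\dots,e_n^{\sigma_n}\}$ of $\sigma$, where $a_{e_j^+}=0$, $a_{e_j^-}=\ell_j$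 and $\langle\cdot,\cdot\rangle$ is the standard inner product. $P_{D(\mathfrak{c},\mathfrak{\ell})}=\{x\in\mathbb{R}^n: 0\le x_j\le A_j(x)\ \forall j\}$. *)

theory Defs
  imports "HOL-Analysis.Analysis"
begin

text \<open>Vectors of R^n (resp. Z^n) are represented as functions on nat that vanish
outside the index set {1..n}.  The topology on nat => real is the product topology
(HOL-Analysis Function_Topology); on the (closed) subspace of functions supported
in {1..n} it is the Euclidean topology of R^n.\<close>

definition Rn :: "nat \<Rightarrow> (nat \<Rightarrow> real) set" where
  "Rn n = {x. \<forall>k. k \<notin> {1..n} \<longrightarrow> x k = 0}"

definition Zn :: "nat \<Rightarrow> (nat \<Rightarrow> int) set" where
  "Zn n = {m. \<forall>k. k \<notin> {1..n} \<longrightarrow> m k = 0}"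

text \<open>Sign vectors sigma in {+,-}^n; True stands for +, False for -.\<close>
definition signs :: "nat \<Rightarrow> (nat \<Rightarrow> bool) set" where
  "signs n = {\<sigma>. \<forall>k. k \<notin> {1..n} \<longrightarrow> \<sigma> k}"

definition Afun :: "nat \<Rightarrow> (nat \<Rightarrow> nat \<Rightarrow> int) \<Rightarrow> (nat \<Rightarrow> int) \<Rightarrow> nat \<Rightarrow> (nat \<Rightarrow> real) \<Rightarrow> real" where
  "Afun n c l j x = real_of_int (l j) - (\<Sum>k\<in>{j+1..n}. real_of_int (c j k) * x k)"

definition twisted_cube :: "nat \<Rightarrow> (nat \<Rightarrow> nat \<Rightarrow> int) \<Rightarrow> (nat \<Rightarrow> int) \<Rightarrow> (nat \<Rightarrow> real) set" where
  "twisted_cube n c l = {x \<in> Rn n. \<forall>k\<in>{1..n}.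
      (Afun n c l k x < x k \<and> x k < 0) \<or> (0 \<le> x k \<and> x k \<le> Afun n c l k x)}"

definition polytope_PD :: "nat \<Rightarrow> (nat \<Rightarrow> nat \<Rightarrow> int) \<Rightarrow> (nat \<Rightarrow> int) \<Rightarrow> (nat \<Rightarrow> real) set" where
  "polytope_PD n c l = {x \<in> Rn n. \<forall>j\<in>{1..n}. 0 \<le> x j \<and> x j \<le> Afun n c l j x}"

definition condP :: "nat \<Rightarrow> (nat \<Rightarrow> nat \<Rightarrow> int) \<Rightarrow> (nat \<Rightarrow> int) \<Rightarrow> bool" where
  "condP n c l \<longleftrightarrow> l n \<ge> 0 \<and>
     (\<forall>k\<in>{1..n-1}. \<forall>x\<in>Rn n.
        (\<forall>i\<in>{k+1..n}. 0 \<le> x i \<and> x i \<le> Afun n c l i x) \<longrightarrow> Afun n c l k x \<ge> 0)"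

text \<open>Ray generators: e_j^+ standard basis, e_j^- = -e_j^+ - sum_{k>j} c_{jk} e_k^+.\<close>
definition eplus :: "nat \<Rightarrow> nat \<Rightarrow> int" where
  "eplus j = (\<lambda>i. if i = j then 1 else 0)"

definition eminus :: "nat \<Rightarrow> (nat \<Rightarrow> nat \<Rightarrow> int) \<Rightarrow> nat \<Rightarrow> nat \<Rightarrow> int" where
  "eminus n c j = (\<lambda>i. if i = j then -1 else if j < i \<and> i \<le> n then - c j i else 0)"

definition gen :: "nat \<Rightarrow> (nat \<Rightarrow> nat \<Rightarrow> int) \<Rightarrow> (nat \<Rightarrow> bool) \<Rightarrow> nat \<Rightarrow> nat \<Rightarrow> int" where
  "gen n c \<sigma> j = (if \<sigma> j then eplus j else eminus n c j)"

text \<open>Coefficients a_u of D = sum_j l_j D_{e_j^-}: a_{e_j^+} = 0, a_{e_j^-} = l_j.\<close>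
definition coef :: "(nat \<Rightarrow> int) \<Rightarrow> (nat \<Rightarrow> bool) \<Rightarrow> nat \<Rightarrow> int" where
  "coef l \<sigma> j = (if \<sigma> j then 0 else l j)"

definition ipZ :: "nat \<Rightarrow> (nat \<Rightarrow> int) \<Rightarrow> (nat \<Rightarrow> int) \<Rightarrow> int" where
  "ipZ n m u = (\<Sum>i\<in>{1..n}. m i * u i)"

definition cartier :: "nat \<Rightarrow> (nat \<Rightarrow> nat \<Rightarrow> int) \<Rightarrow> (nat \<Rightarrow> int) \<Rightarrow> (nat \<Rightarrow> bool) \<Rightarrow> nat \<Rightarrow> int" where
  "cartier n c l \<sigma> = (THE m. m \<in> Zn n \<and>
      (\<forall>j\<in>{1..n}. ipZ n m (gen n c \<sigma> j) = - coef l \<sigma> j))"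

end

theory Submission
  imports Defs
begin

text \<open>The Cartier data solve a triangular system: \<open>m\<^sub>\<sigma>\<close> has \<open>k\<close>-th coordinate \<open>0\<close> if
\<open>\<sigma>\<^sub>k = +\<close> and \<open>A\<^sub>k(m\<^sub>\<sigma>)\<close> if \<open>\<sigma>\<^sub>k = -\<close>. Hence (b) and (c) both say that \<open>A\<^sub>k(m\<^sub>\<sigma>) \<ge> 0\<close> for all
\<open>\<sigma>\<close> and \<open>k\<close>. Under (P), a downward induction on the coordinates shows that every point of
\<open>C\<close> lies in \<open>P\<close>, and \<open>P\<close> is closed. Conversely, an affine function of \<open>x\<^sub>j, \<dots>, x\<^sub>n\<close> that is
nonnegative at all \<open>m\<^sub>\<sigma>\<close> is nonnegative wherever \<open>0 \<le> x\<^sub>i \<le> A\<^sub>i(x)\<close> for \<open>i \<ge> j\<close>: choosing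
\<open>\<sigma>\<^sub>j\<close> according to the sign of the coefficient of \<open>x\<^sub>j\<close> reduces it to one in fewer variables.
Applied to \<open>A\<^sub>k\<close> this gives (P). Finally, if \<open>A\<^sub>k(m\<^sub>\<sigma>) < 0\<close> with \<open>k\<close> maximal, the points with
\<open>x\<^sub>k = -t\<close>, upper coordinates those of \<open>m\<^sub>\<sigma>\<close> and lower coordinates \<open>min(0, A\<^sub>i(x))/2\<close> lie
in \<open>C\<close> for small \<open>t > 0\<close> and depend continuously on \<open>t\<close>, but the limit \<open>t = 0\<close> does not,
so \<open>C\<close> is not closed.\<close>

section \<open>Triangular systems\<close>

definition upper_triangular :: "(nat \<Rightarrow> (nat \<Rightarrow> 'a) \<Rightarrow> 'b) \<Rightarrow> bool" where
  "upper_triangular F \<longleftrightarrow> (\<forall>j x y. (\<forall>i>j. x i = y i) \<longrightarrow> F j x = F j y)"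

lemma upper_triangularD:
  "upper_triangular F \<Longrightarrow> (\<And>i. j < i \<Longrightarrow> x i = y i) \<Longrightarrow> F j x = F j y"
  unfolding upper_triangular_def by blast

text \<open>Solutions of \<open>x\<^sub>j = F j x\<close> (\<open>1 \<le> j \<le> n\<close>) supported in \<open>{1..n}\<close> are the fixed points
of \<open>jacobi_step n F\<close>.\<close>

definition jacobi_step :: "nat \<Rightarrow> (nat \<Rightarrow> (nat \<Rightarrow> 'a) \<Rightarrow> 'a) \<Rightarrow> (nat \<Rightarrow> 'a) \<Rightarrow> nat \<Rightarrow> 'a::zero" where
  "jacobi_step n F x j = (if j \<in> {1..n} then F j x else 0)"

definition triangular_solve :: "nat \<Rightarrow> (nat \<Rightarrow> (nat \<Rightarrow> 'a) \<Rightarrow> 'a) \<Rightarrow> nat \<Rightarrow> 'a::zero" where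
  "triangular_solve n F = (jacobi_step n F ^^ n) (\<lambda>_. 0)"

lemma jacobi_step_inside: "j \<in> {1..n} \<Longrightarrow> jacobi_step n F x j = F j x"
  and jacobi_step_outside: "j \<notin> {1..n} \<Longrightarrow> jacobi_step n F x j = 0"
  by (auto simp: jacobi_step_def)

lemma jacobi_fixpoints_agree:
  assumes F: "upper_triangular F"
    and x: "jacobi_step n F x = x" and y: "jacobi_step n G y = y"
    and FG: "\<And>j. J < j \<Longrightarrow> F j = G j"
  shows "J < i \<Longrightarrow> x i = y i"
proof (induction "n - i" arbitrary: i rule: less_induct)
  case less
  show ?case
  proof (cases "i \<le> n")
    case False
    then show ?thesis
      using fun_cong[OF x, of i] fun_cong[OF y, of i] by (simp add: jacobi_step_outside)
  next
    case True
    have "x k = y k" if "i < k" for k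
    proof (cases "k \<le> n")
      case True
      then have "n - k < n - i" using \<open>i < k\<close> by linarith
      moreover have "J < k" using less.prems \<open>i < k\<close> by linarith
      ultimately show ?thesis by (rule less.hyps)
    next
      case False
      then show ?thesis
        using fun_cong[OF x, of k] fun_cong[OF y, of k] by (simp add: jacobi_step_outside)
    qed
    then have "F i x = F i y" by (rule upper_triangularD[OF F])
    then show ?thesis
      using fun_cong[OF x, of i] fun_cong[OF y, of i] FG[of i] less.prems True
      by (simp add: jacobi_step_inside)
  qed
qed

lemma jacobi_fixpoint_unique:
  assumes "upper_triangular F" "jacobi_step n F x = x" "jacobi_step n F y = y"
  shows "x = y"
proof
  fix i
  show "x i = y i"
  proof (cases "i = 0")
    case True
    then show ?thesis
      using fun_cong[OF assms(2), of i] fun_cong[OF assms(3), of i] by (simp add: jacobi_step_outside)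
  next
    case False
    then show ?thesis using jacobi_fixpoints_agree[OF assms, of 0] by simp
  qed
qed

lemma jacobi_iterates_stable:
  assumes F: "upper_triangular F"
  shows "n - d < j \<Longrightarrow> (jacobi_step n F ^^ d) (\<lambda>_. 0) j = (jacobi_step n F ^^ Suc d) (\<lambda>_. 0) j"
proof (induction d arbitrary: j)
  case 0
  then show ?case by (simp add: jacobi_step_outside)
next
  case (Suc d)
  show ?case
  proof (cases "j \<in> {1..n}")
    case True
    have "F j ((jacobi_step n F ^^ d) (\<lambda>_. 0)) = F j ((jacobi_step n F ^^ Suc d) (\<lambda>_. 0))"
    proof (rule upper_triangularD[OF F])
      fix i assume "j < i"
      then have "n - d < i" using Suc.prems by linarith
      then show "(jacobi_step n F ^^ d) (\<lambda>_. 0) i = (jacobi_step n F ^^ Suc d) (\<lambda>_. 0) i"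
        by (rule Suc.IH)
    qed
    then show ?thesis using True by (simp only: funpow.simps o_apply jacobi_step_inside)
  next
    case False
    then show ?thesis by (simp add: jacobi_step_outside)
  qed
qed

lemma triangular_solve_fixpoint:
  assumes "upper_triangular F"
  shows "jacobi_step n F (triangular_solve n F) = triangular_solve n F"
proof
  fix j
  show "jacobi_step n F (triangular_solve n F) j = triangular_solve n F j"
  proof (cases "j = 0")
    case True
    then have "triangular_solve n F j = 0"
      by (cases n) (simp_all add: triangular_solve_def jacobi_step_outside)
    then show ?thesis using True by (simp add: jacobi_step_outside)
  next
    case False
    then show ?thesis
      using jacobi_iterates_stable[OF assms, of n n j] by (simp add: triangular_solve_def)
  qed
qed

lemma continuous_on_triangular_solve:
  fixes F :: "'b::topological_space \<Rightarrow> nat \<Rightarrow> (nat \<Rightarrow> 'a::{zero,topological_space}) \<Rightarrow> 'a"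
  assumes "\<And>j g. j \<in> {1..n} \<Longrightarrow> continuous_on S g \<Longrightarrow> continuous_on S (\<lambda>t. F t j (g t))"
  shows "continuous_on S (\<lambda>t. triangular_solve n (F t))"
proof -
  have "continuous_on S (\<lambda>t. (jacobi_step n (F t) ^^ d) (\<lambda>_. 0))" for d
  proof (induction d)
    case 0
    then show ?case by simp
  next
    case (Suc d)
    show ?case
    proof (rule continuous_on_coordinatewise_then_product)
      fix j
      show "continuous_on S (\<lambda>t. (jacobi_step n (F t) ^^ Suc d) (\<lambda>_. 0) j)"
      proof (cases "j \<in> {1..n}")
        case True
        then show ?thesis using assms[OF True Suc.IH] by (simp only: funpow.simps o_apply jacobi_step_inside)
      next
        case False
        then show ?thesis by (simp add: jacobi_step_outside)
      qed
    qed
  qed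
  then show ?thesis by (simp only: triangular_solve_def)
qed

section \<open>The functions \<open>A\<^sub>j\<close>\<close>

lemma upper_triangular_Afun: "upper_triangular (Afun n c l)"
  unfolding upper_triangular_def Afun_def by (auto intro!: sum.cong)

lemma Afun_last: "Afun n c l n x = real_of_int (l n)"
  by (simp add: Afun_def)

lemma continuous_on_Afun: "continuous_on UNIV (Afun n c l j)"
  unfolding Afun_def by (intro continuous_intros continuous_on_product_coordinates)

section \<open>The Cartier data\<close>

definition cartier_system :: "nat \<Rightarrow> (nat \<Rightarrow> nat \<Rightarrow> int) \<Rightarrow> (nat \<Rightarrow> int) \<Rightarrow> (nat \<Rightarrow> bool) \<Rightarrow> nat \<Rightarrow> (nat \<Rightarrow> int) \<Rightarrow> int" where
  "cartier_system n c l \<sigma> j m = (if \<sigma> j then 0 else l j - (\<Sum>k\<in>{j+1..n}. c j k * m k))"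

lemma upper_triangular_cartier_system: "upper_triangular (cartier_system n c l \<sigma>)"
  unfolding upper_triangular_def cartier_system_def by (auto intro!: sum.cong)

lemma ipZ_eplus: "j \<in> {1..n} \<Longrightarrow> ipZ n m (eplus j) = m j"
  unfolding ipZ_def eplus_def by (simp add: if_distrib cong: if_cong)

lemma ipZ_eminus:
  assumes "j \<in> {1..n}"
  shows "ipZ n m (eminus n c j) = - m j - (\<Sum>i\<in>{j+1..n}. c j i * m i)"
proof -
  have "ipZ n m (eminus n c j) = (\<Sum>i\<in>{j..n}. m i * eminus n c j i)"
    unfolding ipZ_def using assms by (intro sum.mono_neutral_right) (auto simp: eminus_def)
  also have "\<dots> = - m j + (\<Sum>i\<in>{j+1..n}. m i * eminus n c j i)"
    using assms by (simp add: sum.atLeast_Suc_atMost eminus_def)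
  also have "(\<Sum>i\<in>{j+1..n}. m i * eminus n c j i) = (\<Sum>i\<in>{j+1..n}. - (c j i * m i))"
    by (intro sum.cong) (auto simp: eminus_def)
  finally show ?thesis by (simp add: sum_negf)
qed

lemma cartier_equation_iff:
  assumes "j \<in> {1..n}"
  shows "ipZ n m (gen n c \<sigma> j) = - coef l \<sigma> j \<longleftrightarrow> m j = cartier_system n c l \<sigma> j m"
  using assms by (auto simp: gen_def coef_def cartier_system_def ipZ_eplus ipZ_eminus)

lemma cartier_fixpoint:
  "jacobi_step n (cartier_system n c l \<sigma>) (cartier n c l \<sigma>) = cartier n c l \<sigma>"
proof -
  have defining_iff: "m \<in> Zn n \<and> (\<forall>j\<in>{1..n}. ipZ n m (gen n c \<sigma> j) = - coef l \<sigma> j)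
      \<longleftrightarrow> jacobi_step n (cartier_system n c l \<sigma>) m = m" for m
    by (auto simp: Zn_def cartier_equation_iff jacobi_step_def fun_eq_iff)
  let ?m = "triangular_solve n (cartier_system n c l \<sigma>)"
  have "cartier n c l \<sigma> = ?m"
    unfolding cartier_def defining_iff
    using triangular_solve_fixpoint jacobi_fixpoint_unique upper_triangular_cartier_system
    by blast
  then show ?thesis
    using triangular_solve_fixpoint[OF upper_triangular_cartier_system] by simp
qed

definition vertex :: "nat \<Rightarrow> (nat \<Rightarrow> nat \<Rightarrow> int) \<Rightarrow> (nat \<Rightarrow> int) \<Rightarrow> (nat \<Rightarrow> bool) \<Rightarrow> nat \<Rightarrow> real" where
  "vertex n c l \<sigma> = (\<lambda>k. real_of_int (cartier n c l \<sigma> k))"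

definition vertex_system :: "nat \<Rightarrow> (nat \<Rightarrow> nat \<Rightarrow> int) \<Rightarrow> (nat \<Rightarrow> int) \<Rightarrow> (nat \<Rightarrow> bool) \<Rightarrow> nat \<Rightarrow> (nat \<Rightarrow> real) \<Rightarrow> real" where
  "vertex_system n c l \<sigma> j x = (if \<sigma> j then 0 else Afun n c l j x)"

lemma upper_triangular_vertex_system: "upper_triangular (vertex_system n c l \<sigma>)"
  using upper_triangular_Afun unfolding upper_triangular_def vertex_system_def by simp

lemma vertex_fixpoint: "jacobi_step n (vertex_system n c l \<sigma>) (vertex n c l \<sigma>) = vertex n c l \<sigma>"
proof
  fix j
  have cartier_j: "cartier n c l \<sigma> j = jacobi_step n (cartier_system n c l \<sigma>) (cartier n c l \<sigma>) j"
    by (simp only: cartier_fixpoint)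
  show "jacobi_step n (vertex_system n c l \<sigma>) (vertex n c l \<sigma>) j = vertex n c l \<sigma> j"
  proof (cases "j \<in> {1..n}")
    case True
    then show ?thesis
      by (simp add: cartier_j jacobi_step_inside vertex_system_def vertex_def cartier_system_def Afun_def)
  next
    case False
    then show ?thesis by (simp add: cartier_j jacobi_step_outside vertex_def)
  qed
qed

lemma vertex_in_Rn: "vertex n c l \<sigma> \<in> Rn n"
  unfolding Rn_def
proof (intro CollectI allI impI)
  fix k assume "k \<notin> {1..n}"
  then show "vertex n c l \<sigma> k = 0"
    using fun_cong[OF vertex_fixpoint, of n c l \<sigma> k] by (simp add: jacobi_step_outside)
qed

lemma vertex_coordinate:
  assumes "j \<in> {1..n}"
  shows "vertex n c l \<sigma> j = (if \<sigma> j then 0 else Afun n c l j (vertex n c l \<sigma>))"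
  using fun_cong[OF vertex_fixpoint, of n c l \<sigma> j] assms
  by (simp add: jacobi_step_inside vertex_system_def)

lemma vertex_fun_upd_above: "j < i \<Longrightarrow> vertex n c l (\<sigma>(j := b)) i = vertex n c l \<sigma> i"
  by (rule jacobi_fixpoints_agree[OF upper_triangular_vertex_system vertex_fixpoint vertex_fixpoint])
    (auto simp: vertex_system_def fun_eq_iff)

lemma Afun_vertex_fun_upd: "Afun n c l j (vertex n c l (\<sigma>(j := b))) = Afun n c l j (vertex n c l \<sigma>)"
  by (rule upper_triangularD[OF upper_triangular_Afun]) (rule vertex_fun_upd_above)

lemma signs_fun_upd: "\<sigma> \<in> signs n \<Longrightarrow> j \<in> {1..n} \<Longrightarrow> \<sigma>(j := b) \<in> signs n"
  by (auto simp: signs_def)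

definition vertices_admissible :: "nat \<Rightarrow> (nat \<Rightarrow> nat \<Rightarrow> int) \<Rightarrow> (nat \<Rightarrow> int) \<Rightarrow> bool" where
  "vertices_admissible n c l \<longleftrightarrow> (\<forall>\<sigma>\<in>signs n. \<forall>k\<in>{1..n}. 0 \<le> Afun n c l k (vertex n c l \<sigma>))"

lemma vertex_in_twisted_cube_iff:
  "vertex n c l \<sigma> \<in> twisted_cube n c l \<longleftrightarrow> (\<forall>k\<in>{1..n}. 0 \<le> Afun n c l k (vertex n c l \<sigma>))"
proof -
  have "(Afun n c l k (vertex n c l \<sigma>) < vertex n c l \<sigma> k \<and> vertex n c l \<sigma> k < 0) \<or>
      (0 \<le> vertex n c l \<sigma> k \<and> vertex n c l \<sigma> k \<le> Afun n c l k (vertex n c l \<sigma>))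
      \<longleftrightarrow> 0 \<le> Afun n c l k (vertex n c l \<sigma>)" if "k \<in> {1..n}" for k
    using vertex_coordinate[OF that, of c l \<sigma>] by auto
  then show ?thesis using vertex_in_Rn by (auto simp: twisted_cube_def)
qed

lemma vertices_in_twisted_cube_iff:
  "(\<forall>\<sigma>\<in>signs n. vertex n c l \<sigma> \<in> twisted_cube n c l) \<longleftrightarrow> vertices_admissible n c l"
  by (simp add: vertex_in_twisted_cube_iff vertices_admissible_def)

text \<open>Flipping \<open>\<sigma>\<^sub>k\<close> to \<open>-\<close> turns \<open>A\<^sub>k(m\<^sub>\<sigma>)\<close> into a coordinate of a Cartier datum.\<close>

lemma cartier_nonneg_iff:
  "(\<forall>\<sigma>\<in>signs n. \<forall>k\<in>{1..n}. 0 \<le> cartier n c l \<sigma> k) \<longleftrightarrow> vertices_admissible n c l"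
proof
  assume nonneg: "\<forall>\<sigma>\<in>signs n. \<forall>k\<in>{1..n}. 0 \<le> cartier n c l \<sigma> k"
  show "vertices_admissible n c l" unfolding vertices_admissible_def
  proof (intro ballI)
    fix \<sigma> k assume \<sigma>: "\<sigma> \<in> signs n" and k: "k \<in> {1..n}"
    have "0 \<le> vertex n c l (\<sigma>(k := False)) k"
      using nonneg signs_fun_upd[OF \<sigma> k] k by (simp add: vertex_def)
    then show "0 \<le> Afun n c l k (vertex n c l \<sigma>)"
      using vertex_coordinate[OF k, of c l "\<sigma>(k := False)"] by (simp add: Afun_vertex_fun_upd)
  qed
next
  assume "vertices_admissible n c l"
  then have "0 \<le> vertex n c l \<sigma> k" if "\<sigma> \<in> signs n" "k \<in> {1..n}" for \<sigma> k
    using vertex_coordinate[OF that(2), of c l \<sigma>] that by (simp add: vertices_admissible_def)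
  then show "\<forall>\<sigma>\<in>signs n. \<forall>k\<in>{1..n}. 0 \<le> cartier n c l \<sigma> k"
    by (simp add: vertex_def)
qed

section \<open>Condition (P)\<close>

lemma condP_imp_in_polytope_PD:
  assumes P: "condP n c l" and x: "x \<in> Rn n"
    and coordinate: "\<And>k. k \<in> {1..n} \<Longrightarrow> 0 \<le> Afun n c l k x \<Longrightarrow> 0 \<le> x k \<and> x k \<le> Afun n c l k x"
  shows "x \<in> polytope_PD n c l"
proof -
  have "0 \<le> x k \<and> x k \<le> Afun n c l k x" if "1 \<le> k" "k \<le> n" for k
    using that
  proof (induction "n - k" arbitrary: k rule: less_induct)
    case less
    have "0 \<le> Afun n c l k x"
    proof (cases "k = n")
      case True
      then show ?thesis using P by (simp add: Afun_last condP_def)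
    next
      case False
      have "\<forall>i\<in>{k+1..n}. 0 \<le> x i \<and> x i \<le> Afun n c l i x"
        using less by (auto intro!: less.hyps)
      then show ?thesis using P x less.prems False unfolding condP_def by auto
    qed
    then show ?case using coordinate less.prems by auto
  qed
  then show ?thesis using x by (auto simp: polytope_PD_def)
qed

lemma condP_imp_twisted_cube_eq_polytope_PD:
  assumes "condP n c l"
  shows "twisted_cube n c l = polytope_PD n c l"
proof
  show "twisted_cube n c l \<subseteq> polytope_PD n c l"
  proof
    fix x assume x: "x \<in> twisted_cube n c l"
    show "x \<in> polytope_PD n c l"
    proof (rule condP_imp_in_polytope_PD[OF assms])
      show "x \<in> Rn n" using x by (simp add: twisted_cube_def)
    next
      fix k assume "k \<in> {1..n}" "0 \<le> Afun n c l k x"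
      moreover have "(Afun n c l k x < x k \<and> x k < 0) \<or> (0 \<le> x k \<and> x k \<le> Afun n c l k x)"
        using x \<open>k \<in> {1..n}\<close> by (simp add: twisted_cube_def)
      ultimately show "0 \<le> x k \<and> x k \<le> Afun n c l k x" by linarith
    qed
  qed
qed (auto simp: polytope_PD_def twisted_cube_def)

lemma condP_imp_vertices_admissible:
  assumes "condP n c l"
  shows "vertices_admissible n c l"
  unfolding vertices_admissible_def
proof (intro ballI)
  fix \<sigma> k assume "k \<in> {1..n}"
  moreover have "vertex n c l \<sigma> \<in> polytope_PD n c l"
    by (rule condP_imp_in_polytope_PD[OF assms vertex_in_Rn]) (simp add: vertex_coordinate)
  ultimately show "0 \<le> Afun n c l k (vertex n c l \<sigma>)"
    unfolding polytope_PD_def by fastforce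
qed

text \<open>If the coefficient of \<open>x\<^sub>j\<close> is nonnegative, drop the term and use the data with
\<open>\<sigma>\<^sub>j = +\<close>; otherwise bound \<open>x\<^sub>j\<close> by \<open>A\<^sub>j(x)\<close> and use those with \<open>\<sigma>\<^sub>j = -\<close>.\<close>

lemma affine_nonneg_if_nonneg_at_vertices:
  fixes a :: real and b :: "nat \<Rightarrow> real"
  assumes "1 \<le> j"
    and "\<forall>\<sigma>\<in>signs n. 0 \<le> a + (\<Sum>i\<in>{j..n}. b i * vertex n c l \<sigma> i)"
    and "\<forall>i\<in>{j..n}. 0 \<le> x i \<and> x i \<le> Afun n c l i x"
  shows "0 \<le> a + (\<Sum>i\<in>{j..n}. b i * x i)"
  using assms
proof (induction "n + 1 - j" arbitrary: j a b rule: less_induct)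
  case less
  show ?case
  proof (cases "j \<le> n")
    case False
    have "(\<lambda>_. True) \<in> signs n" by (simp add: signs_def)
    then show ?thesis using less.prems(2) False by auto
  next
    case j_le: True
    then have j: "j \<in> {1..n}" using less.prems(1) by simp
    have split: "(\<Sum>i\<in>{j..n}. b i * y i) = b j * y j + (\<Sum>i\<in>{j+1..n}. b i * y i)" for y
      using j_le by (simp add: sum.atLeast_Suc_atMost)
    have tail_fun_upd: "(\<Sum>i\<in>{j+1..n}. b' i * vertex n c l (\<sigma>(j := s)) i) = (\<Sum>i\<in>{j+1..n}. b' i * vertex n c l \<sigma> i)"
      for b' \<sigma> s by (intro sum.cong) (auto simp: vertex_fun_upd_above)
    have x_j: "0 \<le> x j" "x j \<le> Afun n c l j x" using less.prems(3) j by auto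
    have x_tail: "\<forall>i\<in>{j+1..n}. 0 \<le> x i \<and> x i \<le> Afun n c l i x" using less.prems(3) by auto
    show ?thesis
    proof (cases "0 \<le> b j")
      case True
      have "0 \<le> a + (\<Sum>i\<in>{j+1..n}. b i * x i)"
      proof (rule less.hyps[of "j + 1"])
        show "\<forall>\<sigma>\<in>signs n. 0 \<le> a + (\<Sum>i\<in>{j+1..n}. b i * vertex n c l \<sigma> i)"
        proof
          fix \<sigma> assume "\<sigma> \<in> signs n"
          then have "0 \<le> a + (\<Sum>i\<in>{j..n}. b i * vertex n c l (\<sigma>(j := True)) i)"
            using less.prems(2) signs_fun_upd[OF _ j] by blast
          then show "0 \<le> a + (\<Sum>i\<in>{j+1..n}. b i * vertex n c l \<sigma> i)"
            using vertex_coordinate[OF j, of c l "\<sigma>(j := True)"] tail_fun_upd[of b \<sigma> True]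
            by (simp add: split)
        qed
      qed (use less.prems(1) j_le x_tail in auto)
      moreover have "0 \<le> b j * x j" using True x_j by simp
      ultimately show ?thesis by (simp add: split)
    next
      case False
      define a' where "a' = a + b j * real_of_int (l j)"
      define b' where "b' = (\<lambda>i. b i - b j * real_of_int (c j i))"
      have substitute: "a + b j * Afun n c l j y + (\<Sum>i\<in>{j+1..n}. b i * y i)
          = a' + (\<Sum>i\<in>{j+1..n}. b' i * y i)" for y
        by (simp add: a'_def b'_def Afun_def algebra_simps sum_distrib_left sum_subtractf sum.distrib)
      have "0 \<le> a' + (\<Sum>i\<in>{j+1..n}. b' i * x i)"
      proof (rule less.hyps[of "j + 1"])
        show "\<forall>\<sigma>\<in>signs n. 0 \<le> a' + (\<Sum>i\<in>{j+1..n}. b' i * vertex n c l \<sigma> i)"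
        proof
          fix \<sigma> assume "\<sigma> \<in> signs n"
          then have "0 \<le> a + (\<Sum>i\<in>{j..n}. b i * vertex n c l (\<sigma>(j := False)) i)"
            using less.prems(2) signs_fun_upd[OF _ j] by blast
          then show "0 \<le> a' + (\<Sum>i\<in>{j+1..n}. b' i * vertex n c l \<sigma> i)"
            using vertex_coordinate[OF j, of c l "\<sigma>(j := False)"] tail_fun_upd[of b \<sigma> False]
              substitute[of "vertex n c l \<sigma>"]
            by (simp add: split Afun_vertex_fun_upd add.assoc)
        qed
      qed (use less.prems(1) j_le x_tail in auto)
      moreover have "b j * Afun n c l j x \<le> b j * x j"
        using False x_j by (simp add: mult_left_mono_neg)
      ultimately show ?thesis using substitute[of x] by (simp add: split)
    qed
  qed
qed

lemma vertices_admissible_imp_condP: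
  assumes admissible: "vertices_admissible n c l" and "n \<ge> 1"
  shows "condP n c l"
  unfolding condP_def
proof (intro conjI ballI impI)
  have "(\<lambda>_. True) \<in> signs n" by (simp add: signs_def)
  then have "0 \<le> Afun n c l n (vertex n c l (\<lambda>_. True))"
    using admissible \<open>n \<ge> 1\<close> by (simp add: vertices_admissible_def)
  then show "0 \<le> l n" by (simp add: Afun_last)
next
  fix k x assume k: "k \<in> {1..n-1}"
    and x: "\<forall>i\<in>{k+1..n}. 0 \<le> x i \<and> x i \<le> Afun n c l i x"
  have Afun_affine: "Afun n c l k y = real_of_int (l k) + (\<Sum>i\<in>{k+1..n}. - real_of_int (c k i) * y i)" for y
    by (simp add: Afun_def sum_negf)
  have "0 \<le> Afun n c l k (vertex n c l \<sigma>)" if "\<sigma> \<in> signs n" for \<sigma>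
    using admissible k that by (auto simp: vertices_admissible_def)
  then have "0 \<le> real_of_int (l k) + (\<Sum>i\<in>{k+1..n}. - real_of_int (c k i) * x i)"
    unfolding Afun_affine using k by (intro affine_nonneg_if_nonneg_at_vertices[OF _ _ x]) auto
  then show "0 \<le> Afun n c l k x" by (simp only: Afun_affine)
qed

section \<open>Closedness\<close>

lemma closed_polytope_PD: "closed (polytope_PD n c l)"
proof -
  have "polytope_PD n c l = (\<Inter>k\<in>-{1..n}. {x. x k = 0}) \<inter>
      (\<Inter>j\<in>{1..n}. {x. 0 \<le> x j} \<inter> {x. x j \<le> Afun n c l j x})"
    unfolding polytope_PD_def Rn_def by auto
  moreover have "closed \<dots>"
    by (intro closed_Int closed_INT ballI closed_Collect_le closed_Collect_eq continuous_on_Afun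
        continuous_on_product_coordinates continuous_on_const)
  ultimately show ?thesis by simp
qed

text \<open>If \<open>A\<^sub>k(x) < 0\<close> and the coordinates above \<open>k\<close> satisfy the twisted cube conditions, then
replacing \<open>x\<^sub>k\<close> by \<open>-t\<close> and filling the coordinates below \<open>k\<close> downwards with \<open>min(0, A\<^sub>i)/2\<close>
gives a curve in the twisted cube for \<open>0 < t < -A\<^sub>k(x)\<close> whose limit at \<open>t = 0\<close> is not in it.\<close>

lemma twisted_cube_not_closed:
  assumes x: "x \<in> Rn n" and k: "k \<in> {1..n}" and negative: "Afun n c l k x < 0"
    and above: "\<forall>i\<in>{k+1..n}. (Afun n c l i x < x i \<and> x i < 0) \<or> (0 \<le> x i \<and> x i \<le> Afun n c l i x)"
  shows "\<not> closed (twisted_cube n c l)"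
proof
  assume closed: "closed (twisted_cube n c l)"
  define F where "F t i z = (if i < k then min 0 (Afun n c l i z) / 2 else (x(k := - t)) i)"
    for t :: real and i and z :: "nat \<Rightarrow> real"
  define y where "y t = triangular_solve n (F t)" for t
  have "upper_triangular (F t)" for t
    using upper_triangular_Afun[of n c l] unfolding upper_triangular_def F_def by metis
  then have y_fixpoint: "jacobi_step n (F t) (y t) = y t" for t
    unfolding y_def by (rule triangular_solve_fixpoint)
  have y_outside: "y t i = 0" if "i \<notin> {1..n}" for t i
    using fun_cong[OF y_fixpoint, of t i] that by (simp add: jacobi_step_outside)
  have y_lower: "y t i = min 0 (Afun n c l i (y t)) / 2" if "1 \<le> i" "i < k" for t i
    using fun_cong[OF y_fixpoint, of t i] that k by (simp add: jacobi_step_inside F_def)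
  have y_upper: "y t i = (x(k := - t)) i" if "k \<le> i" for t i
  proof (cases "i \<in> {1..n}")
    case True
    then show ?thesis
      using fun_cong[OF y_fixpoint, of t i] that by (simp add: jacobi_step_inside F_def)
  next
    case False
    then show ?thesis using y_outside[OF False] x k by (auto simp: Rn_def)
  qed
  have Afun_y: "Afun n c l i (y t) = Afun n c l i x" if "k \<le> i" for t i
    by (rule upper_triangularD[OF upper_triangular_Afun]) (use that in \<open>simp add: y_upper\<close>)
  have "continuous_on UNIV y"
    unfolding y_def
  proof (rule continuous_on_triangular_solve)
    fix j and g :: "real \<Rightarrow> nat \<Rightarrow> real"
    assume "continuous_on UNIV g"
    then have "continuous_on UNIV (\<lambda>t. Afun n c l j (g t))"
      by (rule continuous_on_compose2[OF continuous_on_Afun]) simp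
    then show "continuous_on UNIV (\<lambda>t. F t j (g t))"
      unfolding F_def by (cases "j < k"; cases "j = k") (simp_all add: continuous_intros)
  qed
  then have closed_preimage: "closed (y -` twisted_cube n c l)"
    using closed_vimage[OF closed] by blast
  define \<epsilon> where "\<epsilon> = - Afun n c l k x"
  have "y t \<in> twisted_cube n c l" if t: "0 < t" "t < \<epsilon>" for t
    unfolding twisted_cube_def
  proof (intro CollectI conjI ballI)
    show "y t \<in> Rn n" by (simp add: Rn_def y_outside)
  next
    fix i assume i: "i \<in> {1..n}"
    consider "i < k" | "i = k" | "k < i" by linarith
    then show "(Afun n c l i (y t) < y t i \<and> y t i < 0) \<or> (0 \<le> y t i \<and> y t i \<le> Afun n c l i (y t))"
    proof cases
      case 1
      then show ?thesis using y_lower[of i t] i by (cases "0 \<le> Afun n c l i (y t)") auto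
    next
      case 2
      then show ?thesis using y_upper[of i t] Afun_y[of i t] t by (simp add: \<epsilon>_def)
    next
      case 3
      then show ?thesis using y_upper[of i t] Afun_y[of i t] above i by auto
    qed
  qed
  then have "{0<..<\<epsilon>} \<subseteq> y -` twisted_cube n c l" by auto
  then have "closure {0<..<\<epsilon>} \<subseteq> y -` twisted_cube n c l"
    by (rule closure_minimal[OF _ closed_preimage])
  moreover have "0 \<in> closure {0<..<\<epsilon>}" using negative by (simp add: \<epsilon>_def)
  ultimately have "y 0 \<in> twisted_cube n c l" by blast
  then have "(Afun n c l k (y 0) < y 0 k \<and> y 0 k < 0) \<or> (0 \<le> y 0 k \<and> y 0 k \<le> Afun n c l k (y 0))"
    using k unfolding twisted_cube_def by blast
  then show False using y_upper[of k 0] Afun_y[of k 0] negative by simp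
qed

lemma closed_twisted_cube_imp_vertices_admissible:
  assumes "closed (twisted_cube n c l)"
  shows "vertices_admissible n c l"
proof (rule ccontr)
  assume "\<not> vertices_admissible n c l"
  then obtain \<sigma> k0 where "k0 \<in> {1..n}" "Afun n c l k0 (vertex n c l \<sigma>) < 0"
    unfolding vertices_admissible_def by (meson not_le)
  define K where "K = {k \<in> {1..n}. Afun n c l k (vertex n c l \<sigma>) < 0}"
  define k where "k = Max K"
  have K: "finite K" "K \<noteq> {}" using \<open>k0 \<in> {1..n}\<close> \<open>Afun n c l k0 _ < 0\<close> by (auto simp: K_def)
  have "k \<in> K" unfolding k_def using K by (rule Max_in)
  then have k: "k \<in> {1..n}" "Afun n c l k (vertex n c l \<sigma>) < 0" by (auto simp: K_def)
  have "0 \<le> vertex n c l \<sigma> i \<and> vertex n c l \<sigma> i \<le> Afun n c l i (vertex n c l \<sigma>)"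
    if i: "i \<in> {k+1..n}" for i
  proof -
    have "0 \<le> Afun n c l i (vertex n c l \<sigma>)"
    proof (rule ccontr)
      assume "\<not> 0 \<le> Afun n c l i (vertex n c l \<sigma>)"
      then have "i \<in> K" using i by (auto simp: K_def)
      with K(1) have "i \<le> k" unfolding k_def by (rule Max_ge)
      then show False using i by simp
    qed
    moreover have "vertex n c l \<sigma> i = (if \<sigma> i then 0 else Afun n c l i (vertex n c l \<sigma>))"
      by (rule vertex_coordinate) (use i k(1) in auto)
    ultimately show ?thesis by (cases "\<sigma> i") simp_all
  qed
  then show False
    using twisted_cube_not_closed[OF vertex_in_Rn k] assms by blast
qed

theorem proposition2p1:
  fixes n :: nat and c :: "nat \<Rightarrow> nat \<Rightarrow> int" and l :: "nat \<Rightarrow> int"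
  assumes "n \<ge> 1"
  shows "(closed (twisted_cube n c l)
          \<longleftrightarrow> (\<forall>\<sigma>\<in>signs n. (\<lambda>k. real_of_int (cartier n c l \<sigma> k)) \<in> twisted_cube n c l))
       \<and> ((\<forall>\<sigma>\<in>signs n. (\<lambda>k. real_of_int (cartier n c l \<sigma> k)) \<in> twisted_cube n c l)
          \<longleftrightarrow> (\<forall>\<sigma>\<in>signs n. \<forall>k\<in>{1..n}. cartier n c l \<sigma> k \<ge> 0))
       \<and> ((\<forall>\<sigma>\<in>signs n. \<forall>k\<in>{1..n}. cartier n c l \<sigma> k \<ge> 0) \<longleftrightarrow> condP n c l)
       \<and> (condP n c l \<longleftrightarrow> twisted_cube n c l = polytope_PD n c l)"
proof -
  have b: "(\<forall>\<sigma>\<in>signs n. (\<lambda>k. real_of_int (cartier n c l \<sigma> k)) \<in> twisted_cube n c l)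
      \<longleftrightarrow> vertices_admissible n c l"
    using vertices_in_twisted_cube_iff by (simp add: vertex_def)
  have d: "condP n c l \<longleftrightarrow> vertices_admissible n c l"
    using condP_imp_vertices_admissible vertices_admissible_imp_condP[OF _ assms] by blast
  have eq: "vertices_admissible n c l \<Longrightarrow> twisted_cube n c l = polytope_PD n c l"
    using d condP_imp_twisted_cube_eq_polytope_PD by blast
  have a: "closed (twisted_cube n c l) \<longleftrightarrow> vertices_admissible n c l"
    using eq closed_twisted_cube_imp_vertices_admissible[of n c l] closed_polytope_PD[of n c l] by auto
  have e: "twisted_cube n c l = polytope_PD n c l \<longleftrightarrow> vertices_admissible n c l"
    using eq closed_twisted_cube_imp_vertices_admissible[of n c l] closed_polytope_PD[of n c l] by auto
  show ?thesis using a b d e cartier_nonneg_iff[of n c l] by simp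
qed

end
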